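(* Fix an integer $t\geq 1$ and a real $\alpha$ with $0<\alpha<1-\frac{1}{\sqrt{2}}$. Then, as $m\to\infty$ through values for which $\alpha m$ is an integer, \[ R_t(\alpha m, m)\leq \left(1-\frac{1}{2^t}\right)2^m-\frac{\sqrt{2^t-1}}{2^t(2+\sqrt{2})}\,2^{ m \left(\frac{1}{2}+\alpha \log_2(1+\sqrt{2})\right)}(1+o(1)). \]
   Context: For a $t\times n$ matrix $\mathbf{v}$ over $\mathbb{F}_q$ with rows $\overline{v}_1,\dots,\overline{v}_t$, its $t$-weight is $\mathrm{wt}^{(t)}(\mathbf{v})=\left|\bigcup_{i=1}^t \mathrm{supp}(\overline{v}_i)\right|$, and $d^{(t)}(\mathbf{u},\mathbf{v})=\mathrm{wt}^{(t)}(\mathbf{u}-\mathbf{v})$. For a linear code $C\subseteq\mathbb{F}_q^n$ and $t\in\mathbb{N}$, let $C^t$ be the set of $t\times n$ matrices all of whose rows lie in $C$. The $t$-th generalized covering radius $R_t(C)$ is the smallest integer $\rho$ such that for every $\mathbf{v}\in\mathbb{F}_q^{t\times n}$ there is $\mathbf{c}\in C^t$ with $d^{(t)}(\mathbf{v},\mathbf{c})\leq \rho$. Binary Reed–Muller codes $\mathrm{RM}(r,m)\subseteq\mathbb{F}_2^{2^m}$ ($0\le r\le m$) are defined recursively: $\mathrm{RM}(0,m)=\{\overline{0},\overline{1}\}$, $\mathrm{RM}(m,m)=\mathbb{F}_2^{2^m}$, and for $1\leq r\leq m-1$, $\mathrm{RM}(r,m)=\{(\overline{u},\overline{u}+\overline{v})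 : \overline{u}\in \mathrm{RM}(r,m-1),\ \overline{v}\in\mathrm{RM}(r-1,m-1)\}$. It is a linear code of length $2^m$ and dimension $\sum_{i=0}^r\binom{m}{i}$. Write $R_t(r,m)=R_t(\mathrm{RM}(r,m))$. *)

theory Defs
  imports Complex_Main
begin

text \<open>Binary vectors of length n are represented as bool lists of length n
  (True = 1, False = 0); addition in F_2 is exclusive or, i.e. (\<noteq>).\<close>

definition vadd :: "bool list \<Rightarrow> bool list \<Rightarrow> bool list" where
  "vadd u v = map2 (\<noteq>) u v"

fun RM :: "nat \<Rightarrow> nat \<Rightarrow> bool list set" where
  "RM r 0 = {xs. length xs = 1}"
| "RM r (Suc m) =
     (if r = 0 then {replicate (2 ^ Suc m) False, replicate (2 ^ Suc m) True}
      else if Suc m \<le> r then {xs. length xs = 2 ^ Suc m}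
      else {u @ vadd u v | u v. u \<in> RM r m \<and> v \<in> RM (r - 1) m})"

text \<open>A t x n matrix is a list of t rows (each of length n).
  Its t-weight is the size of the union of the supports of its rows.\<close>

definition tweight :: "bool list list \<Rightarrow> nat" where
  "tweight vs = card {j. \<exists>v \<in> set vs. j < length v \<and> v ! j}"

definition tdist :: "bool list list \<Rightarrow> bool list list \<Rightarrow> nat" where
  "tdist us vs = tweight (map2 vadd us vs)"

definition gen_cov_radius :: "nat \<Rightarrow> nat \<Rightarrow> bool list set \<Rightarrow> nat" where
  "gen_cov_radius t n C = (LEAST \<rho>. \<forall>vs. length vs = t \<and> (\<forall>v \<in> set vs. length v = n) \<longrightarrow>
      (\<exists>cs. length cs = t \<and> set cs \<subseteq> C \<and> tdist vs cs \<le> \<rho>))"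

definition R_RM :: "nat \<Rightarrow> nat \<Rightarrow> nat \<Rightarrow> nat" where
  "R_RM t r m = gen_cov_radius t (2 ^ m) (RM r m)"

end

theory Submission
  imports Defs "HOL-Analysis.Convex"
begin

(* Base case r = 1: for a word v and a set T of coordinates, Parseval's identity over the
   2^(k+1) affine words of RM(1,k) gives one whose signs correlate with those of v on T by at
   least sqrt |T|, i.e. which agrees with v on (|T| + sqrt |T|) / 2 coordinates of T.  Choosing
   the t rows greedily, each on the agreement set of the previous ones, gives
   R_t(1,k) <= (1 - 2^-t) 2^k - sqrt (2^k / 2^(t+1)).
   Plotkin's (u | u+v) construction gives R_t(r,m+1) <= R_t(r,m) + R_t(r-1,m), and R_t(m,m) = 0.
   Both sqrt 2^m (1 + sqrt 2)^r and (1 + 1/nu)^m nu^r satisfy this recursion with equality; for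
   nu >= 1 + sqrt 2 their difference, divided by (1 + sqrt 2) sqrt (2^(t+1)), is dominated by the
   boundary cases and so bounds (1 - 2^-t) 2^m - R_t(r,m) from below.
   For r = alpha m the second term is theta^m times the first, with
   theta = (1 + 1/nu) (nu / (1 + sqrt 2))^alpha / sqrt 2; a nu slightly above 1 + sqrt 2 makes
   theta < 1 precisely because alpha < 1 - 1/sqrt 2.  Since sqrt (2^t - 1) / 2^t < 2^(-t/2), the
   bound then holds even without the o(1) term. *)

section \<open>Words and the t-distance\<close>

lemma length_vadd: "length (vadd u v) = min (length u) (length v)"
  by (simp add: vadd_def)

lemma nth_vadd: "j < length u \<Longrightarrow> j < length v \<Longrightarrow> vadd u v ! j = (u!j \<noteq> v!j)"
  by (simp add: vadd_def)

lemma vadd_replicate_False: "length u = n \<Longrightarrow> vadd u (replicate n False) = u"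
  by (induction u arbitrary: n) (auto simp: vadd_def)

lemma vadd_replicate_True: "length u = n \<Longrightarrow> vadd u (replicate n True) = map Not u"
  by (induction u arbitrary: n) (auto simp: vadd_def)

lemma length_RM: "c \<in> RM r m \<Longrightarrow> length c = 2 ^ m"
proof (induction m arbitrary: r c)
  case (Suc m)
  then show ?case by (auto simp: length_vadd split: if_splits)
qed simp

lemma zeros_in_RM: "replicate (2 ^ m) False \<in> RM r m"
proof (induction m arbitrary: r)
  case (Suc m)
  have "replicate (2 ^ Suc m) False = replicate (2 ^ m) False @ vadd (replicate (2 ^ m) False) (replicate (2 ^ m) False)"
    by (simp add: vadd_replicate_False replicate_add[symmetric] mult_2)
  then show ?case
    using Suc.IH by (auto simp: length_vadd)
qed simp

lemma RM_Suc:
  "1 \<le> r \<Longrightarrow> r \<le> m \<Longrightarrow> RM r (Suc m) = {u @ vadd u v | u v. u \<in> RM r m \<and> v \<in> RM (r - 1) m}"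
  by simp

lemma sum_lessThan_add:
  fixes f :: "nat \<Rightarrow> 'a::comm_monoid_add"
  shows "(\<Sum>x<m + n. f x) = (\<Sum>x<m. f x) + (\<Sum>x<n. f (m + x))"
  by (induction n) (simp_all add: add.assoc)

lemma sum_lessThan_restrict:
  fixes f :: "nat \<Rightarrow> 'a::comm_monoid_add"
  shows "T \<subseteq> {..<n} \<Longrightarrow> (\<Sum>x<n. if x \<in> T then f x else 0) = sum f T"
  using sum.inter_restrict[OF finite_lessThan, of f n T] by (simp add: Int_absorb1)

lemma card_lessThan_add_split:
  fixes m n :: nat
  shows "card {j. j < m + n \<and> P j} = card {j. j < m \<and> P j} + card {j. j < n \<and> P (m + j)}"
proof -
  have "{j. j < m + n \<and> P j} = {j. j < m \<and> P j} \<union> (+) m ` {j. j < n \<and> P (m + j)}"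
    by (auto simp: image_iff) (metis add_diff_inverse_nat add_less_cancel_left)
  moreover have "{j. j < m \<and> P j} \<inter> (+) m ` {j. j < n \<and> P (m + j)} = {}"
    by auto
  ultimately show ?thesis
    by (simp add: card_Un_disjoint card_image)
qed

lemma tdist_eq_card_disagreements:
  assumes "length cs = length vs" "\<forall>v\<in>set vs. length v = n" "\<forall>c\<in>set cs. length c = n"
  shows "tdist vs cs = card {j. j < n \<and> (\<exists>i<length vs. vs!i!j \<noteq> cs!i!j)}"
  unfolding tdist_def tweight_def
proof (intro arg_cong[where f = card] set_eqI iffI)
  fix j assume "j \<in> {j. \<exists>w\<in>set (map2 vadd vs cs). j < length w \<and> w!j}"
  then obtain i where "i < length vs" "j < length (vadd (vs!i) (cs!i))" "vadd (vs!i) (cs!i) ! j"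
    using assms(1) by (auto simp: in_set_conv_nth)
  moreover have "length (vs!i) = n" "length (cs!i) = n"
    using assms \<open>i < length vs\<close> by auto
  ultimately show "j \<in> {j. j < n \<and> (\<exists>i<length vs. vs!i!j \<noteq> cs!i!j)}"
    by (auto simp: nth_vadd length_vadd)
next
  fix j assume "j \<in> {j. j < n \<and> (\<exists>i<length vs. vs!i!j \<noteq> cs!i!j)}"
  then obtain i where i: "i < length vs" "j < n" "vs!i!j \<noteq> cs!i!j" by blast
  have "map2 vadd vs cs ! i \<in> set (map2 vadd vs cs)"
    using i(1) assms(1) by (intro nth_mem) simp
  then have w: "vadd (vs!i) (cs!i) \<in> set (map2 vadd vs cs)"
    using i(1) assms(1) by simp
  have "length (vs!i) = n" "length (cs!i) = n"
    using assms i(1) by auto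
  then have "j < length (vadd (vs!i) (cs!i)) \<and> vadd (vs!i) (cs!i) ! j"
    using i by (simp add: nth_vadd length_vadd)
  with w show "j \<in> {j. \<exists>w\<in>set (map2 vadd vs cs). j < length w \<and> w!j}"
    by blast
qed

text \<open>In the (u | u + v) construction the left halves of the rows are matched by u, and the right
  halves, corrected by u, by v.\<close>

lemma tdist_append_vadd:
  assumes "length us = length vs" "length ws = length vs"
    and "\<forall>v\<in>set vs. length v = n + n" "\<forall>u\<in>set us. length u = n" "\<forall>w\<in>set ws. length w = n"
  shows "tdist vs (map2 (\<lambda>u w. u @ vadd u w) us ws)
       = tdist (map (take n) vs) us + tdist (map2 vadd (map (drop n) vs) us) ws"
proof -
  let ?cs = "map2 (\<lambda>u w. u @ vadd u w) us ws"
  let ?left = "map (take n) vs" and ?right = "map2 vadd (map (drop n) vs) us"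
  have len: "length (vs!i) = n + n" "length (us!i) = n" "length (ws!i) = n"
    if "i < length vs" for i
    using assms that by auto
  have "(vs!i!j \<noteq> ?cs!i!j) = (?left!i!j \<noteq> us!i!j)"
    and "(vs!i!(n + j) \<noteq> ?cs!i!(n + j)) = (?right!i!j \<noteq> ws!i!j)"
    if "i < length vs" "j < n" for i j
    using that assms(1,2) len[OF that(1)] by (auto simp: nth_append nth_vadd)
  then have left: "(\<exists>i<length vs. vs!i!j \<noteq> ?cs!i!j) = (\<exists>i<length ?left. ?left!i!j \<noteq> us!i!j)"
    and right: "(\<exists>i<length vs. vs!i!(n + j) \<noteq> ?cs!i!(n + j)) = (\<exists>i<length ?right. ?right!i!j \<noteq> ws!i!j)"
    if "j < n" for j
    using that assms(1) by (simp_all only: length_map length_zip min.idem) blast+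
  have "tdist vs ?cs = card {j. j < n + n \<and> (\<exists>i<length vs. vs!i!j \<noteq> ?cs!i!j)}"
    using assms len by (intro tdist_eq_card_disagreements) (auto simp: set_zip length_vadd)
  also have "\<dots> = card {j. j < n \<and> (\<exists>i<length vs. vs!i!j \<noteq> ?cs!i!j)}
      + card {j. j < n \<and> (\<exists>i<length vs. vs!i!(n + j) \<noteq> ?cs!i!(n + j))}"
    by (rule card_lessThan_add_split)
  also have "\<dots> = card {j. j < n \<and> (\<exists>i<length ?left. ?left!i!j \<noteq> us!i!j)}
      + card {j. j < n \<and> (\<exists>i<length ?right. ?right!i!j \<noteq> ws!i!j)}"
    using left right by (intro arg_cong2[where f = "(+)"] arg_cong[where f = card] Collect_cong) blast+
  also have "\<dots> = tdist ?left us + tdist ?right ws"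
    using assms len by (intro arg_cong2[where f = "(+)"] tdist_eq_card_disagreements[symmetric])
      (auto simp: set_zip length_vadd)
  finally show ?thesis .
qed

lemma gen_cov_radius_le:
  assumes "\<And>vs. length vs = t \<Longrightarrow> \<forall>v\<in>set vs. length v = n \<Longrightarrow>
      \<exists>cs. length cs = t \<and> set cs \<subseteq> C \<and> real (tdist vs cs) \<le> B"
  shows "real (gen_cov_radius t n C) \<le> B"
proof -
  have "0 \<le> B"
    using assms[of "replicate t (replicate n False)"] by force
  have "\<exists>cs. length cs = t \<and> set cs \<subseteq> C \<and> tdist vs cs \<le> nat \<lfloor>B\<rfloor>"
    if "length vs = t \<and> (\<forall>v\<in>set vs. length v = n)" for vs
    using that assms[of vs] by (auto simp: le_nat_floor)
  then have "gen_cov_radius t n C \<le> nat \<lfloor>B\<rfloor>"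
    unfolding gen_cov_radius_def by (intro Least_le) blast
  then show ?thesis
    using \<open>0 \<le> B\<close> by linarith
qed

lemma gen_cov_radius_attained:
  assumes "c \<in> C" "length c = n" "length vs = t" "\<forall>v\<in>set vs. length v = n"
  shows "\<exists>cs. length cs = t \<and> set cs \<subseteq> C \<and> tdist vs cs \<le> gen_cov_radius t n C"
proof -
  have cover_n: "\<exists>cs. length cs = t \<and> set cs \<subseteq> C \<and> tdist ws cs \<le> n"
    if "length ws = t \<and> (\<forall>w\<in>set ws. length w = n)" for ws
  proof (intro exI[of _ "replicate t c"] conjI)
    have "tdist ws (replicate t c) = card {j. j < n \<and> (\<exists>i<t. ws!i!j \<noteq> replicate t c!i!j)}"
      using that assms(2) tdist_eq_card_disagreements[of "replicate t c" ws n] by auto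
    also have "\<dots> \<le> card {..<n}"
      by (intro card_mono) auto
    finally show "tdist ws (replicate t c) \<le> n" by simp
  qed (use assms(1) in \<open>auto simp: set_replicate_conv_if\<close>)
  have "\<forall>ws. length ws = t \<and> (\<forall>w\<in>set ws. length w = n) \<longrightarrow>
      (\<exists>cs. length cs = t \<and> set cs \<subseteq> C \<and> tdist ws cs \<le> gen_cov_radius t n C)"
    unfolding gen_cov_radius_def by (rule LeastI[of _ n]) (use cover_n in blast)
  then show ?thesis
    using assms(3,4) by blast
qed

lemma gen_cov_radius_plotkin_le:
  assumes A: "\<forall>u\<in>A. length u = n" "a \<in> A" and B: "\<forall>w\<in>B. length w = n" "b \<in> B"
    and C: "{u @ vadd u w | u w. u \<in> A \<and> w \<in> B} \<subseteq> C"
  shows "gen_cov_radius t (n + n) C \<le> gen_cov_radius t n A + gen_cov_radius t n B"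
proof -
  have "real (gen_cov_radius t (n + n) C) \<le> real (gen_cov_radius t n A) + real (gen_cov_radius t n B)"
  proof (rule gen_cov_radius_le)
    fix vs :: "bool list list"
    assume vs: "length vs = t" "\<forall>v\<in>set vs. length v = n + n"
    let ?left = "map (take n) vs"
    obtain us where us: "length us = t" "set us \<subseteq> A"
      and us_close: "tdist ?left us \<le> gen_cov_radius t n A"
      using gen_cov_radius_attained[of a A n ?left t] A vs by auto
    have us_len: "\<forall>u\<in>set us. length u = n"
      using us(2) A(1) by blast
    let ?right = "map2 vadd (map (drop n) vs) us"
    have "\<forall>v\<in>set ?right. length v = n"
      using vs us(1) us_len by (auto simp: set_zip length_vadd)
    then obtain ws where ws: "length ws = t" "set ws \<subseteq> B"
      and ws_close: "tdist ?right ws \<le> gen_cov_radius t n B"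
      using gen_cov_radius_attained[of b B n ?right t] B vs(1) us(1) by auto
    let ?cs = "map2 (\<lambda>u w. u @ vadd u w) us ws"
    have "set ?cs \<subseteq> C"
    proof
      fix c assume "c \<in> set ?cs"
      then obtain i where i: "i < t" "c = us!i @ vadd (us!i) (ws!i)"
        using us(1) ws(1) by (auto simp: set_zip)
      have "us!i \<in> set us" "ws!i \<in> set ws"
        using i(1) us(1) ws(1) by simp_all
      then show "c \<in> C"
        using us(2) ws(2) C i(2) by blast
    qed
    moreover have "tdist vs ?cs = tdist ?left us + tdist ?right ws"
      using vs us(1) ws us_len B(1) by (intro tdist_append_vadd) auto
    ultimately show "\<exists>cs. length cs = t \<and> set cs \<subseteq> C \<and>
        real (tdist vs cs) \<le> real (gen_cov_radius t n A) + real (gen_cov_radius t n B)"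
      using us(1) ws(1) us_close ws_close by (intro exI[of _ ?cs]) simp
  qed
  then show ?thesis
    by linarith
qed

section \<open>First-order Reed--Muller codes\<close>

definition bsign :: "bool \<Rightarrow> real" where
  "bsign b = (if b then -1 else 1)"

lemma bsign_Not [simp]: "bsign (\<not> b) = - bsign b"
  by (simp add: bsign_def)

lemma bsign_mult_bsign: "bsign a * bsign b = (if a = b then 1 else -1)"
  by (simp add: bsign_def)

lemma bsign_squared [simp]: "(bsign b)\<^sup>2 = 1"
  by (simp add: bsign_def)

fun affine_words :: "nat \<Rightarrow> bool list list" where
  "affine_words 0 = [[False], [True]]"
| "affine_words (Suc k) =
     map (\<lambda>u. u @ u) (affine_words k) @ map (\<lambda>u. u @ map Not u) (affine_words k)"

lemma length_affine_words: "length (affine_words k) = 2 ^ Suc k"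
  by (induction k) auto

lemma length_affine_word: "c \<in> set (affine_words k) \<Longrightarrow> length c = 2 ^ k"
  by (induction k arbitrary: c) auto

lemma map_Not_affine_word: "c \<in> set (affine_words k) \<Longrightarrow> map Not c \<in> set (affine_words k)"
proof (induction k arbitrary: c)
  case (Suc k)
  then consider u where "u \<in> set (affine_words k)" "c = u @ u"
    | u where "u \<in> set (affine_words k)" "c = u @ map Not u"
    by auto
  then show ?case
  proof cases
    case 1
    then show ?thesis using Suc.IH by auto
  next
    case 2
    then have "map Not c = map Not u @ map Not (map Not u)" by simp
    then show ?thesis using Suc.IH[OF 2(1)] by (auto simp del: map_map)
  qed
qed auto

lemma affine_word_in_RM1: "c \<in> set (affine_words k) \<Longrightarrow> c \<in> RM 1 k"
proof (induction k arbitrary: c)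
  case (Suc k)
  show ?case
  proof (cases k)
    case 0
    then show ?thesis using length_affine_word[OF Suc.prems] by simp
  next
    case (Suc k')
    from Suc.prems obtain u where u: "u \<in> set (affine_words k)" "c = u @ u \<or> c = u @ map Not u"
      by auto
    have "length u = 2 ^ k" using length_affine_word[OF u(1)] .
    then have "c = u @ vadd u (replicate (2^k) False) \<or> c = u @ vadd u (replicate (2^k) True)"
      using u(2) by (simp add: vadd_replicate_False vadd_replicate_True)
    moreover have "RM 0 k = {replicate (2^k) False, replicate (2^k) True}"
      using Suc by simp
    moreover have "RM 1 (Suc k) = {u @ vadd u v | u v. u \<in> RM 1 k \<and> v \<in> RM 0 k}"
      using Suc RM_Suc[of 1 k] by simp
    ultimately show ?thesis
      using Suc.IH[OF u(1)] by blast
  qed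
qed auto

lemma affine_words_parseval:
  fixes g :: "nat \<Rightarrow> real"
  shows "(\<Sum>c\<leftarrow>affine_words k. (\<Sum>x<2^k. g x * bsign (c!x))\<^sup>2) = 2 ^ Suc k * (\<Sum>x<2^k. (g x)\<^sup>2)"
proof (induction k arbitrary: g)
  case 0
  then show ?case by (simp add: bsign_def power2_eq_square)
next
  case (Suc k)
  define n :: nat where "n = 2 ^ k"
  define corr where "corr h u = (\<Sum>x<n. h x * bsign (u!x))" for h u
  define g' where "g' x = g (n + x)" for x
  have double: "(2::nat) ^ Suc k = n + n" by (simp add: n_def)
  have len: "length u = n" if "u \<in> set (affine_words k)" for u
    using length_affine_word[OF that] by (simp add: n_def)
  have "(\<Sum>x<2^Suc k. g x * bsign ((u @ u)!x)) = corr g u + corr g' u"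
    and "(\<Sum>x<2^Suc k. g x * bsign ((u @ map Not u)!x)) = corr g u - corr g' u"
    if "u \<in> set (affine_words k)" for u
    using len[OF that] unfolding double
    by (simp_all add: sum_lessThan_add corr_def g'_def nth_append sum_negf)
  then have "(\<Sum>c\<leftarrow>affine_words (Suc k). (\<Sum>x<2^Suc k. g x * bsign (c!x))\<^sup>2)
      = (\<Sum>u\<leftarrow>affine_words k. (corr g u + corr g' u)\<^sup>2) + (\<Sum>u\<leftarrow>affine_words k. (corr g u - corr g' u)\<^sup>2)"
    by (simp cong: map_cong)
  also have "\<dots> = 2 * (\<Sum>u\<leftarrow>affine_words k. (corr g u)\<^sup>2) + 2 * (\<Sum>u\<leftarrow>affine_words k. (corr g' u)\<^sup>2)"
    by (simp add: power2_eq_square algebra_simps sum_list_addf sum_list_subtractf sum_list_const_mult)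
  also have "\<dots> = 2 ^ Suc (Suc k) * ((\<Sum>x<n. (g x)\<^sup>2) + (\<Sum>x<n. (g' x)\<^sup>2))"
    using Suc.IH[of g] Suc.IH[of g'] by (simp add: corr_def n_def algebra_simps)
  also have "\<dots> = 2 ^ Suc (Suc k) * (\<Sum>x<2^Suc k. (g x)\<^sup>2)"
    by (simp only: double sum_lessThan_add g'_def)
  finally show ?case .
qed

lemma exists_affine_word_correlation_ge:
  fixes g :: "nat \<Rightarrow> real"
  shows "\<exists>c\<in>set (affine_words k). sqrt (\<Sum>x<2^k. (g x)\<^sup>2) \<le> (\<Sum>x<2^k. g x * bsign (c!x))"
proof (rule ccontr)
  define S where "S = (\<Sum>x<(2::nat)^k. (g x)\<^sup>2)"
  define corr where "corr c = (\<Sum>x<(2::nat)^k. g x * bsign (c!x))" for c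
  assume "\<not> ?thesis"
  then have below: "corr c < sqrt S" if "c \<in> set (affine_words k)" for c
    using that by (auto simp: corr_def S_def not_le)
  have "(corr c)\<^sup>2 < S" if c: "c \<in> set (affine_words k)" for c
  proof -
    have "corr (map Not c) = - corr c"
      using length_affine_word[OF c] by (simp add: corr_def sum_negf)
    then have "\<bar>corr c\<bar> < sqrt S"
      using below[OF c] below[OF map_Not_affine_word[OF c]] by linarith
    then show ?thesis
      by (metis real_sqrt_abs real_sqrt_less_iff)
  qed
  moreover have "affine_words k \<noteq> []"
    using length_affine_words[of k] by auto
  ultimately have "(\<Sum>c\<leftarrow>affine_words k. (corr c)\<^sup>2) < (\<Sum>c\<leftarrow>affine_words k. S)"
    by (intro sum_list_strict_mono) auto
  then show False
    using affine_words_parseval[of g k] by (simp add: corr_def S_def sum_list_triv length_affine_words)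
qed

text \<open>Choosing the codeword by correlation with the signs of v on T gains sqrt |T| / 2 agreements
  over the |T| / 2 that a random choice guarantees.\<close>

lemma exists_RM1_agreeing:
  assumes T: "T \<subseteq> {..<2^k}"
  shows "\<exists>c\<in>RM 1 k. card T + sqrt (card T) \<le> 2 * real (card {x\<in>T. c!x = v!x})"
proof -
  define g where "g x = (if x \<in> T then bsign (v!x) else 0)" for x
  obtain c where c: "c \<in> set (affine_words k)"
    and corr: "sqrt (\<Sum>x<2^k. (g x)\<^sup>2) \<le> (\<Sum>x<2^k. g x * bsign (c!x))"
    using exists_affine_word_correlation_ge by blast
  have finite_T: "finite T" using T finite_subset by blast
  have "(\<Sum>x<2^k. (g x)\<^sup>2) = (\<Sum>x<2^k. if x \<in> T then 1 else 0)"
    by (intro sum.cong) (simp_all add: g_def)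
  also have "\<dots> = card T"
    using sum_lessThan_restrict[OF T, of "\<lambda>_. 1::real"] by simp
  finally have norm: "(\<Sum>x<2^k. (g x)\<^sup>2) = card T" .
  have "(\<Sum>x<2^k. g x * bsign (c!x)) = (\<Sum>x<2^k. if x \<in> T then bsign (c!x) * bsign (v!x) else 0)"
    by (intro sum.cong) (simp_all add: g_def)
  also have "\<dots> = (\<Sum>x\<in>T. bsign (c!x) * bsign (v!x))"
    by (rule sum_lessThan_restrict[OF T])
  also have "\<dots> = (\<Sum>x\<in>T. 2 * (if c!x = v!x then 1 else 0) - 1)"
    by (intro sum.cong) (auto simp: bsign_mult_bsign)
  also have "\<dots> = 2 * real (card {x\<in>T. c!x = v!x}) - card T"
    using finite_T by (simp add: sum_subtractf sum_distrib_left[symmetric] sum.If_cases Int_def)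
  finally show ?thesis
    using c corr norm affine_word_in_RM1 by (intro bexI[of _ c]) auto
qed

lemma exists_RM1_rows_agreeing:
  assumes "vs \<noteq> []" and "T \<subseteq> {..<2^k}"
  shows "\<exists>cs. length cs = length vs \<and> set cs \<subseteq> RM 1 k \<and>
     card T / 2 ^ length vs + sqrt (card T / 2 ^ Suc (length vs))
       \<le> real (card {x\<in>T. \<forall>i<length vs. cs!i!x = vs!i!x})"
  using assms
proof (induction vs arbitrary: T)
  case (Cons v vs)
  obtain c where c: "c \<in> RM 1 k" and gain: "card T + sqrt (card T) \<le> 2 * real (card {x\<in>T. c!x = v!x})"
    using exists_RM1_agreeing[OF Cons.prems(2)] by blast
  define T' where "T' = {x\<in>T. c!x = v!x}"
  have T': "T' \<subseteq> {..<2^k}" using Cons.prems(2) by (auto simp: T'_def)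
  have half: "card T / 2 \<le> real (card T')"
    using gain real_sqrt_ge_zero[of "card T"] unfolding T'_def by linarith
  show ?case
  proof (cases "vs = []")
    case True
    have "sqrt (card T / 2 ^ 2) = sqrt (card T) / 2"
      by (simp add: real_sqrt_divide)
    moreover have "{x\<in>T. \<forall>i<1. [c]!i!x = [v]!i!x} = T'"
      by (auto simp: T'_def)
    ultimately show ?thesis
      using c gain True by (intro exI[of _ "[c]"]) (simp add: T'_def)
  next
    case False
    obtain cs where cs: "length cs = length vs" "set cs \<subseteq> RM 1 k"
      and IH: "card T' / 2 ^ length vs + sqrt (card T' / 2 ^ Suc (length vs))
        \<le> real (card {x\<in>T'. \<forall>i<length vs. cs!i!x = vs!i!x})"
      using Cons.IH[OF False T'] by blast
    have "{x\<in>T. \<forall>i<length (v#vs). (c#cs)!i!x = (v#vs)!i!x} = {x\<in>T'. \<forall>i<length vs. cs!i!x = vs!i!x}"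
      by (auto simp: T'_def All_less_Suc2)
    moreover have "card T / 2 ^ length (v#vs) + sqrt (card T / 2 ^ Suc (length (v#vs)))
        \<le> card T' / 2 ^ length vs + sqrt (card T' / 2 ^ Suc (length vs))"
      using half by (intro add_mono real_sqrt_le_mono) (simp_all add: field_simps)
    ultimately show ?thesis
      using IH c cs by (intro exI[of _ "c#cs"]) simp
  qed
qed simp

section \<open>The recursion for the covering radius\<close>

lemma R_RM_one_le:
  assumes "t \<ge> 1"
  shows "real (R_RM t 1 k) \<le> (1 - 1 / 2 ^ t) * 2 ^ k - sqrt (2 ^ k / 2 ^ Suc t)"
  unfolding R_RM_def
proof (rule gen_cov_radius_le)
  fix vs :: "bool list list"
  assume vs: "length vs = t" "\<forall>v\<in>set vs. length v = 2 ^ k"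
  define N :: nat where "N = 2 ^ k"
  define agree where "agree cs = {x\<in>{..<N}. \<forall>i<t. cs!i!x = vs!i!x}" for cs
  have "vs \<noteq> []"
    using vs(1) assms by auto
  then obtain cs where cs: "length cs = t" "set cs \<subseteq> RM 1 k"
    and many: "N / 2 ^ t + sqrt (N / 2 ^ Suc t) \<le> card (agree cs)"
    using exists_RM1_rows_agreeing[of vs "{..<N}" k] unfolding agree_def vs(1) card_lessThan N_def
    by blast
  have agree_sub: "agree cs \<subseteq> {..<N}"
    by (auto simp: agree_def)
  have "\<forall>c\<in>set cs. length c = N"
    using cs(2) length_RM by (auto simp: N_def)
  then have "tdist vs cs = card {j. j < N \<and> (\<exists>i<t. vs!i!j \<noteq> cs!i!j)}"
    using tdist_eq_card_disagreements[of cs vs N] cs(1) vs by (simp add: N_def)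
  also have "{j. j < N \<and> (\<exists>i<t. vs!i!j \<noteq> cs!i!j)} = {..<N} - agree cs"
    by (auto simp: agree_def)
  also have "card ({..<N} - agree cs) = N - card (agree cs)"
    using agree_sub by (simp add: card_Diff_subset finite_subset)
  finally have "real (tdist vs cs) = N - real (card (agree cs))"
    using card_mono[OF finite_lessThan agree_sub] by simp
  then show "\<exists>cs. length cs = t \<and> set cs \<subseteq> RM 1 k \<and>
      real (tdist vs cs) \<le> (1 - 1 / 2 ^ t) * 2 ^ k - sqrt (2 ^ k / 2 ^ Suc t)"
    using cs many by (intro exI[of _ cs]) (simp add: N_def algebra_simps)
qed

lemma R_RM_diagonal: "1 \<le> m \<Longrightarrow> R_RM t m m = 0"
  unfolding R_RM_def
proof (rule gen_cov_radius_le[where B = 0, simplified])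
  fix vs :: "bool list list"
  assume "1 \<le> m" "length vs = t" "\<forall>v\<in>set vs. length v = 2 ^ m"
  moreover have "RM m m = {xs. length xs = 2 ^ m}"
    using \<open>1 \<le> m\<close> by (cases m) auto
  ultimately show "\<exists>cs. length cs = t \<and> set cs \<subseteq> RM m m \<and> tdist vs cs = 0"
    using tdist_eq_card_disagreements[of vs vs "2 ^ m"] by (intro exI[of _ vs]) auto
qed

lemma R_RM_Suc_le:
  assumes "1 \<le> r" "r \<le> m"
  shows "R_RM t r (Suc m) \<le> R_RM t r m + R_RM t (r - 1) m"
  unfolding R_RM_def power_Suc mult_2
  by (rule gen_cov_radius_plotkin_le[where a = "replicate (2 ^ m) False" and b = "replicate (2 ^ m) False"])
    (use RM_Suc[OF assms] length_RM zeros_in_RM in auto)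

section \<open>Solving the recursion\<close>

text \<open>Both terms f satisfy f (r+1) (m+1) = f (r+1) m + f r m, because
  sqrt 2 * (1 + sqrt 2) = (1 + sqrt 2) + 1 and (1 + 1/\<nu>) * \<nu> = \<nu> + 1.\<close>

definition correction :: "real \<Rightarrow> nat \<Rightarrow> nat \<Rightarrow> real" where
  "correction \<nu> r m = sqrt 2 ^ m * (1 + sqrt 2) ^ r - (1 + 1 / \<nu>) ^ m * \<nu> ^ r"

lemma power_pascal:
  fixes p q :: "'a::comm_semiring_1"
  assumes "p * q = q + 1"
  shows "p ^ Suc m * q ^ Suc r = p ^ m * q ^ Suc r + p ^ m * q ^ r"
proof -
  have "p ^ Suc m * q ^ Suc r = p ^ m * q ^ r * (p * q)"
    by (simp add: mult_ac)
  then show ?thesis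
    using assms by (simp add: algebra_simps)
qed

lemma correction_Suc_Suc:
  assumes "\<nu> \<noteq> 0"
  shows "correction \<nu> (Suc r) (Suc m) = correction \<nu> (Suc r) m + correction \<nu> r m"
proof -
  have "sqrt 2 * (1 + sqrt 2) = (1 + sqrt 2) + (1::real)"
    by (simp add: algebra_simps)
  moreover have "(1 + 1 / \<nu>) * \<nu> = \<nu> + 1"
    using assms by (simp add: field_simps)
  ultimately show ?thesis
    unfolding correction_def by (simp only: power_pascal)
qed

lemma correction_diagonal_nonpos:
  assumes "1 + sqrt 2 \<le> \<nu>"
  shows "correction \<nu> m m \<le> 0"
proof -
  have "\<nu> > 0"
    using assms real_sqrt_ge_zero[of 2] by linarith
  then have "sqrt 2 * (1 + sqrt 2) \<le> (1 + 1 / \<nu>) * \<nu>"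
    using assms by (simp add: algebra_simps)
  then have "(sqrt 2 * (1 + sqrt 2)) ^ m \<le> ((1 + 1 / \<nu>) * \<nu>) ^ m"
    by (intro power_mono) auto
  then show ?thesis
    by (simp add: correction_def power_mult_distrib)
qed

lemma R_RM_le_correction:
  assumes "t \<ge> 1" "1 + sqrt 2 \<le> \<nu>" "1 \<le> r" "r \<le> m"
  shows "real (R_RM t r m) \<le> (1 - 1 / 2 ^ t) * 2 ^ m - correction \<nu> r m / ((1 + sqrt 2) * sqrt (2 ^ Suc t))"
  using assms(3,4)
proof (induction m arbitrary: r)
  case (Suc m)
  define D where "D = (1 + sqrt 2) * sqrt (2 ^ Suc t)"
  have "D > 0"
    by (simp add: D_def add_pos_nonneg)
  have "\<nu> > 0"
    using assms(2) real_sqrt_ge_zero[of 2] by linarith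
  obtain r' where r': "r = Suc r'"
    using Suc.prems(1) by (cases r) auto
  consider "r = 1" | "r = Suc m" | "1 \<le> r'" "r \<le> m"
    using Suc.prems(2) r' by (cases "r' = 0"; cases "r' = m") auto
  then show ?case
  proof cases
    case 1
    have "correction \<nu> 1 (Suc m) \<le> sqrt 2 ^ Suc m * (1 + sqrt 2)"
      using \<open>\<nu> > 0\<close> by (simp add: correction_def)
    then have "correction \<nu> 1 (Suc m) / D \<le> sqrt 2 ^ Suc m * (1 + sqrt 2) / D"
      using \<open>D > 0\<close> by (intro divide_right_mono) auto
    also have "\<dots> = sqrt 2 ^ Suc m / sqrt (2 ^ Suc t)"
      using add_pos_nonneg[of 1 "sqrt 2"] by (simp add: D_def)
    also have "\<dots> = sqrt (2 ^ Suc m / 2 ^ Suc t)"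
      by (simp only: real_sqrt_divide real_sqrt_power)
    finally show ?thesis
      using R_RM_one_le[OF assms(1), of "Suc m"] 1 by (simp add: D_def)
  next
    case 2
    have "correction \<nu> r (Suc m) / D \<le> 0"
      using correction_diagonal_nonpos[OF assms(2)] \<open>D > 0\<close> 2 by (simp add: divide_nonpos_pos)
    moreover have "(0::real) \<le> (1 - 1 / 2 ^ t) * 2 ^ Suc m"
      by simp
    moreover have "real (R_RM t r (Suc m)) = 0"
      using R_RM_diagonal[of "Suc m" t] 2 by simp
    ultimately show ?thesis
      unfolding D_def by linarith
  next
    case 3
    have "real (R_RM t r (Suc m)) \<le> real (R_RM t r m) + real (R_RM t r' m)"
      using R_RM_Suc_le[OF Suc.prems(1) 3(2), of t] r' by simp
    also have "\<dots> \<le> (1 - 1 / 2 ^ t) * 2 ^ m - correction \<nu> r m / D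
        + ((1 - 1 / 2 ^ t) * 2 ^ m - correction \<nu> r' m / D)"
      using Suc.IH[of r] Suc.IH[of r'] r' 3 by (intro add_mono) (simp_all add: D_def)
    also have "\<dots> = (1 - 1 / 2 ^ t) * 2 ^ Suc m - correction \<nu> r (Suc m) / D"
      using correction_Suc_Suc[of \<nu> r' m] \<open>\<nu> > 0\<close> r' by (simp add: add_divide_distrib)
    finally show ?thesis
      by (simp add: D_def)
  qed
qed simp

section \<open>Asymptotics for r = \<alpha> m\<close>

lemma powr_le_1_plus_mult:
  fixes \<alpha> \<delta> :: real
  assumes "0 \<le> \<alpha>" "\<alpha> \<le> 1" "-1 < \<delta>"
  shows "(1 + \<delta>) powr \<alpha> \<le> 1 + \<alpha> * \<delta>"
proof -
  have "(1 + \<delta>) powr \<alpha> * 1 powr (1 - \<alpha>) \<le> \<alpha> * (1 + \<delta>) + (1 - \<alpha>) * 1"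
    using assms by (intro Youngs_inequality_0) auto
  then show ?thesis
    by (simp add: algebra_simps)
qed

lemma exists_ratio_below_sqrt2:
  fixes \<alpha> :: real
  assumes "0 < \<alpha>" "\<alpha> < 1 - 1 / sqrt 2"
  shows "\<exists>\<nu> \<ge> 1 + sqrt 2. (1 + 1 / \<nu>) * (\<nu> / (1 + sqrt 2)) powr \<alpha> < sqrt 2"
proof -
  define a :: real where "a = sqrt 2 - 1"
  have "a > 0"
    by (simp add: a_def)
  have "a * (1 + sqrt 2) = 1"
    by (simp add: a_def algebra_simps)
  then have inv: "1 / (1 + sqrt 2) = a"
    using add_pos_nonneg[of 1 "sqrt 2"] by (simp add: field_simps)
  have "\<alpha> * sqrt 2 < (1 - 1 / sqrt 2) * sqrt 2"
    using assms(2) by simp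
  then have "\<alpha> * (1 + a) < a"
    by (simp add: a_def algebra_simps)
  define \<delta> where "\<delta> = (a - \<alpha> * (1 + a)) / (2 * \<alpha>)"
  have "\<delta> > 0"
    using \<open>\<alpha> * (1 + a) < a\<close> assms(1) by (simp add: \<delta>_def)
  have "\<alpha> * \<delta> = (a - \<alpha> * (1 + a)) / 2"
    using assms(1) by (simp add: \<delta>_def)
  then have small: "\<alpha> * (1 + a + \<delta>) < a"
    using \<open>\<alpha> * (1 + a) < a\<close> by (simp add: algebra_simps)
  define \<nu> where "\<nu> = (1 + sqrt 2) * (1 + \<delta>)"
  have "1 + sqrt 2 \<le> \<nu>"
    using \<open>\<delta> > 0\<close> by (simp add: \<nu>_def add_pos_nonneg)
  have "0 < 1 / sqrt (2::real)"
    by simp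
  then have "\<alpha> < 1"
    using assms(2) by linarith
  have "\<nu> / (1 + sqrt 2) = 1 + \<delta>"
    using add_pos_nonneg[of 1 "sqrt 2"] by (simp add: \<nu>_def)
  then have bernoulli: "(\<nu> / (1 + sqrt 2)) powr \<alpha> \<le> 1 + \<alpha> * \<delta>"
    using assms(1) \<open>\<alpha> < 1\<close> \<open>\<delta> > 0\<close> by (simp add: powr_le_1_plus_mult)
  have "1 / \<nu> = 1 / (1 + sqrt 2) / (1 + \<delta>)"
    by (simp add: \<nu>_def)
  then have "1 + 1 / \<nu> = (1 + \<delta> + a) / (1 + \<delta>)"
    using \<open>\<delta> > 0\<close> inv by (simp add: field_simps)
  moreover have "(1 + \<delta> + a) / (1 + \<delta>) * (\<nu> / (1 + sqrt 2)) powr \<alpha>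
      \<le> (1 + \<delta> + a) / (1 + \<delta>) * (1 + \<alpha> * \<delta>)"
    using bernoulli \<open>a > 0\<close> \<open>\<delta> > 0\<close> by (intro mult_left_mono) auto
  ultimately have "(1 + 1 / \<nu>) * (\<nu> / (1 + sqrt 2)) powr \<alpha> \<le> (1 + \<delta> + a) / (1 + \<delta>) * (1 + \<alpha> * \<delta>)"
    by simp
  also have "\<dots> < 1 + a"
  proof -
    have "(1 + a) * (1 + \<delta>) - (1 + \<delta> + a) * (1 + \<alpha> * \<delta>) = \<delta> * (a - \<alpha> * (1 + a + \<delta>))"
      by (simp add: algebra_simps)
    also have "\<dots> > 0"
      using \<open>\<delta> > 0\<close> small by simp
    finally show ?thesis
      using \<open>\<delta> > 0\<close> by (simp add: field_simps)
  qed
  also have "1 + a = sqrt 2"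
    by (simp add: a_def)
  finally show ?thesis
    using \<open>1 + sqrt 2 \<le> \<nu>\<close> by blast
qed

lemma two_powr_eq_growth:
  assumes "real r = \<alpha> * real m"
  shows "2 powr (real m * (1 / 2 + \<alpha> * log 2 (1 + sqrt 2))) = sqrt 2 ^ m * (1 + sqrt 2) ^ r"
proof -
  have "(2::real) powr (real m * (1 / 2 + \<alpha> * log 2 (1 + sqrt 2)))
      = (2 powr (1 / 2)) powr real m * (2 powr log 2 (1 + sqrt 2)) powr real r"
    using assms by (simp add: powr_add[symmetric] powr_powr algebra_simps)
  also have "\<dots> = sqrt 2 ^ m * (1 + sqrt 2) ^ r"
    by (simp add: powr_half_sqrt powr_realpow add_pos_nonneg)
  finally show ?thesis .
qed

lemma correction_eq_growth:
  assumes "real r = \<alpha> * real m" "0 < \<nu>"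
  shows "correction \<nu> r m
    = (1 - ((1 + 1 / \<nu>) * (\<nu> / (1 + sqrt 2)) powr \<alpha> / sqrt 2) ^ m) * (sqrt 2 ^ m * (1 + sqrt 2) ^ r)"
proof -
  define x where "x = \<nu> / (1 + sqrt 2)"
  have "x > 0"
    using assms(2) by (simp add: x_def add_pos_nonneg)
  have "(x powr \<alpha>) ^ m = x ^ r"
    using \<open>x > 0\<close> assms(1) by (simp add: powr_realpow[symmetric] powr_powr mult.commute)
  then have "((1 + 1 / \<nu>) * x powr \<alpha> / sqrt 2) ^ m * (sqrt 2 ^ m * (1 + sqrt 2) ^ r)
      = (1 + 1 / \<nu>) ^ m * (x * (1 + sqrt 2)) ^ r"
    by (simp add: power_mult_distrib power_divide)
  also have "x * (1 + sqrt 2) = \<nu>"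
    using add_pos_nonneg[of 1 "sqrt 2"] by (simp add: x_def)
  finally show ?thesis
    by (simp add: correction_def x_def algebra_simps)
qed

lemma tail_constant_eq:
  "sqrt (2 ^ t - 1) / (2 ^ t * (2 + sqrt 2)) * ((1 + sqrt 2) * sqrt (2 ^ Suc t)) = sqrt (1 - 1 / 2 ^ t)"
proof -
  define s :: real where "s = 2 ^ t"
  have "s > 0" by (simp add: s_def)
  define c :: real where "c = sqrt 2 * (1 + sqrt 2)"
  have "c > 0"
    by (simp add: c_def add_pos_nonneg)
  have "sqrt (2 ^ t - 1) / (2 ^ t * (2 + sqrt 2)) * ((1 + sqrt 2) * sqrt (2 ^ Suc t))
      = sqrt (s - 1) / (s * c) * (sqrt s * c)"
    by (simp add: s_def c_def real_sqrt_mult algebra_simps)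
  also have "\<dots> = sqrt (s - 1) * sqrt s / s"
    using \<open>c > 0\<close> by simp
  also have "\<dots> = sqrt (s - 1) / sqrt s"
    using \<open>s > 0\<close> by (simp add: field_simps)
  also have "\<dots> = sqrt (1 - 1 / s)"
    using \<open>s > 0\<close> by (simp add: real_sqrt_divide[symmetric] diff_divide_distrib)
  finally show ?thesis
    by (simp add: s_def)
qed

lemma R_RM_eventually_le:
  fixes t :: nat and \<alpha> :: real
  assumes "t \<ge> 1" and "0 < \<alpha>" and "\<alpha> < 1 - 1 / sqrt 2"
  shows "\<forall>\<^sub>F m in sequentially. \<forall>r :: nat. real r = \<alpha> * real m \<longrightarrow>
    real (R_RM t r m) \<le> (1 - 1 / 2 ^ t) * 2 ^ m
      - sqrt (2 ^ t - 1) / (2 ^ t * (2 + sqrt 2)) * 2 powr (real m * (1 / 2 + \<alpha> * log 2 (1 + sqrt 2)))"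
proof -
  obtain \<nu> where \<nu>: "1 + sqrt 2 \<le> \<nu>" and ratio: "(1 + 1 / \<nu>) * (\<nu> / (1 + sqrt 2)) powr \<alpha> < sqrt 2"
    using exists_ratio_below_sqrt2[OF assms(2,3)] by blast
  define \<theta> where "\<theta> = (1 + 1 / \<nu>) * (\<nu> / (1 + sqrt 2)) powr \<alpha> / sqrt 2"
  define K where "K = sqrt (2 ^ t - 1) / (2 ^ t * (2 + sqrt 2))"
  define D where "D = (1 + sqrt 2) * sqrt (2 ^ Suc t)"
  define X where "X m = 2 powr (real m * (1 / 2 + \<alpha> * log 2 (1 + sqrt 2)))" for m :: nat
  have "0 < 1 / sqrt (2::real)"
    by simp
  then have "\<alpha> < 1"
    using assms(3) by linarith
  have "\<nu> > 0"
    using \<nu> real_sqrt_ge_zero[of 2] by linarith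
  then have "0 \<le> \<theta>" "\<theta> < 1"
    using ratio by (simp_all add: \<theta>_def)
  have "D > 0"
    by (simp add: D_def add_pos_nonneg)
  have "K * D < 1"
    using tail_constant_eq[of t] by (simp add: K_def D_def)
  have "\<forall>\<^sub>F m in sequentially. \<theta> ^ m < 1 - K * D"
    using LIMSEQ_power_zero[of \<theta>] \<open>0 \<le> \<theta>\<close> \<open>\<theta> < 1\<close> \<open>K * D < 1\<close>
    by (intro order_tendstoD(2)) auto
  then show ?thesis
    using eventually_ge_at_top[of 1] unfolding K_def[symmetric] X_def[symmetric]
  proof eventually_elim
    case (elim m)
    show ?case
    proof (intro allI impI)
      fix r :: nat
      assume r: "real r = \<alpha> * real m"
      have "0 < real r"
        using r elim(2) assms(2) by simp
      moreover have "real r \<le> real m"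
        using r assms(2) \<open>\<alpha> < 1\<close> by (simp add: mult_left_le_one_le)
      ultimately have "1 \<le> r" "r \<le> m"
        by simp_all
      have correction: "correction \<nu> r m = (1 - \<theta> ^ m) * X m"
        using correction_eq_growth[OF r \<open>\<nu> > 0\<close>] two_powr_eq_growth[OF r] by (simp add: \<theta>_def X_def)
      have "K * D * X m \<le> (1 - \<theta> ^ m) * X m"
        using elim(1) by (intro mult_right_mono) (simp_all add: X_def)
      then have "K * X m \<le> (1 - \<theta> ^ m) * X m / D"
        using \<open>D > 0\<close> by (simp add: pos_le_divide_eq mult_ac)
      then show "real (R_RM t r m) \<le> (1 - 1 / 2 ^ t) * 2 ^ m - K * X m"
        using R_RM_le_correction[OF assms(1) \<nu> \<open>1 \<le> r\<close> \<open>r \<le> m\<close>] correction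
        by (simp add: D_def)
    qed
  qed
qed

theorem theorem21:
  fixes t :: nat and \<alpha> :: real
  assumes "t \<ge> 1" and "0 < \<alpha>" and "\<alpha> < 1 - 1 / sqrt 2"
  shows "\<exists>\<epsilon> :: nat \<Rightarrow> real. \<epsilon> \<longlonglongrightarrow> 0 \<and>
    (\<forall>\<^sub>F m in sequentially. \<forall>r :: nat. real r = \<alpha> * real m \<longrightarrow>
       real (R_RM t r m) \<le> (1 - 1 / 2 ^ t) * 2 ^ m
         - sqrt (2 ^ t - 1) / (2 ^ t * (2 + sqrt 2))
           * 2 powr (real m * (1 / 2 + \<alpha> * log 2 (1 + sqrt 2))) * (1 + \<epsilon> m))"
  using R_RM_eventually_le[OF assms] by (intro exI[of _ "\<lambda>_. 0"]) simp

end
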